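(* In the setting described in the context: (i) Type A blowup occurs if and only if either ($0<v_0<1$ and $\omega_0>-\frac{\nu}{2}f_0(v_0)$) or ($v_0>1$ and $\omega_0<-\frac{\nu}{2}f_0(v_0)$). (ii) Type B blowup occurs if and only if either ($0<v_0<1$ and $\omega_0<-\frac{\nu}{2}f_\infty(v_0)$) or ($v_0>1$ and $\omega_0>-\frac{\nu}{2}f_\infty(v_0)$). (iii) In either blowup type, $\|\omega(\cdot,t)\|_{L^2}\to\infty$ and $\|\omega(\cdot,t)\|_{B_0}\to\infty$ as $t\to t_c^-$. (iv) If either ($0<v_0<1$ and $-\frac{\nu}{2}f_\infty(v_0)\le\omega_0\le-\frac{\nu}{2}f_0(v_0)$) or ($v_0>1$ and $-\frac{\nu}{2}f_0(v_0)\le\omega_0\le-\frac{\nu}{2}f_\infty(v_0)$), then neither type of blowup occurs and $v_c(t)\in(0,\infty)$ for all $t>0$, so the solution exists globally.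
   Context: Fix $\nu>0$, $v_0>0$ with $v_0\neq1$, and $\omega_0\in\mathbb{R}$. Consider the real ODE system $\frac{d\omega_{-2,i}}{dt}=\omega_{-2,i}^2\frac{1-2v_c^2+5v_c^4}{4v_c^2(1-v_c^2)^2}-\nu\omega_{-2,i}$, $\frac{dv_c}{dt}=-\omega_{-2,i}\frac{1+v_c^2}{4v_c(1-v_c^2)}$ with $v_c(0)=v_0$, $\omega_{-2,i}(0)=\omega_0$; its solution (continued through $v_c=1$) is characterized as follows. Let $F(v)=\frac{v(v^2-1)}{(v^2+1)^2}+\arctan v$, which is a strictly increasing bijection from $(0,\infty)$ onto $(0,\pi/2)$, and let $G(t)=F(v_0)+\frac{2\omega_0 v_0(1-e^{-\nu t})}{\nu(v_0^2-1)(v_0^2+1)^2}$. Then $v_c(t)$ is defined by $F(v_c(t))=G(t)$ for as long as $G(t)\in(0,\pi/2)$, and $\omega_{-2,i}(t)=\omega_0e^{-\nu t}\frac{v_0}{v_c(t)}\frac{v_c(t)^2-1}{v_0^2-1}\left(\frac{v_c(t)^2+1}{v_0^2+1}\right)^2$. Type A blowup means: there is a finite $t_c>0$ with $v_c(t)>0$ on $[0,t_c)$ and $v_c(t)\to0^+$ as $t\to t_c^-$. Type B blowup means: there is a finite $t_c>0$ with $v_c(t)\in(0,\infty)$ on $[0,t_c)$ and $v_c(t)\to+\infty$ as $t\to t_c^-$. Here $f_0(x)=(x^2-1)^2+\frac{(x^2+1)^2}{x}(x^2-1)\arctan(x)$ and $f_\infty(x)=(x^2-1)^2+\frac{(x^2+1)^2}{x}(x^2-1)\left(\arctan(x)-\frac{\pi}{2}\right)$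 for $x>0$. The associated $2\pi$-periodic real function is $\omega(x,t)=\omega_-(x,t)+\overline{\omega_-(\bar x,t)}$, where, with $X=\tan(x/2)$, $\omega_{-2}=\mathrm{i}\omega_{-2,i}$ and $\omega_{-1}=\frac{2\mathrm{i}v_c}{1-v_c^2}\omega_{-2}$, $\omega_-(x,t)=\omega_{-1}\left[\frac{1}{X-\mathrm{i}v_c}-\frac{1}{-\mathrm{i}-\mathrm{i}v_c}\right]+\omega_{-2}\left[\frac{1}{(X-\mathrm{i}v_c)^2}-\frac{1}{(-\mathrm{i}-\mathrm{i}v_c)^2}\right]$. Norms: $\|f\|_{L^2}^2=\int_{-\pi}^{\pi}|f|^2dx$ and $\|f\|_{B_0}=\sum_{k\in\mathbb{Z}}|\hat f_k|$ with $\hat f_k=\frac{1}{2\pi}\int_{-\pi}^{\pi}f(x)e^{-\mathrm{i}kx}dx$. *)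

theory Defs
  imports "HOL-Analysis.Analysis"
begin

definition Fv :: "real \<Rightarrow> real" where
  "Fv v = v * (v^2 - 1) / (v^2 + 1)^2 + arctan v"

definition Gt :: "real \<Rightarrow> real \<Rightarrow> real \<Rightarrow> real \<Rightarrow> real" where
  "Gt \<nu> v0 w0 t = Fv v0 + 2 * w0 * v0 * (1 - exp (- \<nu> * t)) / (\<nu> * (v0^2 - 1) * (v0^2 + 1)^2)"

definition sol_defined :: "real \<Rightarrow> real \<Rightarrow> real \<Rightarrow> real \<Rightarrow> bool" where
  "sol_defined \<nu> v0 w0 t \<longleftrightarrow> 0 < Gt \<nu> v0 w0 t \<and> Gt \<nu> v0 w0 t < pi / 2"

definition vc :: "real \<Rightarrow> real \<Rightarrow> real \<Rightarrow> real \<Rightarrow> real" where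
  "vc \<nu> v0 w0 t = (THE v. 0 < v \<and> Fv v = Gt \<nu> v0 w0 t)"

definition w2i :: "real \<Rightarrow> real \<Rightarrow> real \<Rightarrow> real \<Rightarrow> real" where
  "w2i \<nu> v0 w0 t = (let v = vc \<nu> v0 w0 t in
     w0 * exp (- \<nu> * t) * (v0 / v) * ((v^2 - 1) / (v0^2 - 1)) * ((v^2 + 1) / (v0^2 + 1))^2)"

definition w2 :: "real \<Rightarrow> real \<Rightarrow> real \<Rightarrow> real \<Rightarrow> complex" where
  "w2 \<nu> v0 w0 t = \<i> * complex_of_real (w2i \<nu> v0 w0 t)"

definition w1 :: "real \<Rightarrow> real \<Rightarrow> real \<Rightarrow> real \<Rightarrow> complex" where
  "w1 \<nu> v0 w0 t = (let v = complex_of_real (vc \<nu> v0 w0 t) in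
     (2 * \<i> * v / (1 - v^2)) * w2 \<nu> v0 w0 t)"

definition omega_minus :: "real \<Rightarrow> real \<Rightarrow> real \<Rightarrow> real \<Rightarrow> real \<Rightarrow> complex" where
  "omega_minus \<nu> v0 w0 x t = (let X = complex_of_real (tan (x / 2));
      v = complex_of_real (vc \<nu> v0 w0 t) in
     w1 \<nu> v0 w0 t * (1 / (X - \<i> * v) - 1 / (- \<i> - \<i> * v))
   + w2 \<nu> v0 w0 t * (1 / (X - \<i> * v)^2 - 1 / (- \<i> - \<i> * v)^2))"

text \<open>omega(x,t) = omega_-(x,t) + conj(omega_-(conj x,t)); for real x, conj x = x.\<close>
definition omega :: "real \<Rightarrow> real \<Rightarrow> real \<Rightarrow> real \<Rightarrow> real \<Rightarrow> complex" where
  "omega \<nu> v0 w0 x t = omega_minus \<nu> v0 w0 x t + cnj (omega_minus \<nu> v0 w0 x t)"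

definition L2_norm :: "(real \<Rightarrow> complex) \<Rightarrow> real" where
  "L2_norm f = sqrt (integral {-pi..pi} (\<lambda>x. (cmod (f x))^2))"

definition fourier_coeff :: "(real \<Rightarrow> complex) \<Rightarrow> int \<Rightarrow> complex" where
  "fourier_coeff f k = (1 / (2 * pi)) * integral {-pi..pi} (\<lambda>x. f x * exp (- \<i> * of_int k * of_real x))"

text \<open>Wiener algebra norm, valued in [0, infinity] so that divergence is representable.\<close>
definition B0_norm :: "(real \<Rightarrow> complex) \<Rightarrow> ennreal" where
  "B0_norm f = (\<Sum>\<^sub>\<infinity> k \<in> (UNIV :: int set). ennreal (cmod (fourier_coeff f k)))"

definition typeA_at :: "real \<Rightarrow> real \<Rightarrow> real \<Rightarrow> real \<Rightarrow> bool" where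
  "typeA_at \<nu> v0 w0 tc \<longleftrightarrow> 0 < tc \<and>
     (\<forall>t \<in> {0..<tc}. sol_defined \<nu> v0 w0 t \<and> 0 < vc \<nu> v0 w0 t) \<and>
     filterlim (vc \<nu> v0 w0) (at_right 0) (at_left tc)"

definition typeB_at :: "real \<Rightarrow> real \<Rightarrow> real \<Rightarrow> real \<Rightarrow> bool" where
  "typeB_at \<nu> v0 w0 tc \<longleftrightarrow> 0 < tc \<and>
     (\<forall>t \<in> {0..<tc}. sol_defined \<nu> v0 w0 t \<and> 0 < vc \<nu> v0 w0 t) \<and>
     filterlim (vc \<nu> v0 w0) at_top (at_left tc)"

definition typeA :: "real \<Rightarrow> real \<Rightarrow> real \<Rightarrow> bool" where
  "typeA \<nu> v0 w0 \<longleftrightarrow> (\<exists>tc. typeA_at \<nu> v0 w0 tc)"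

definition typeB :: "real \<Rightarrow> real \<Rightarrow> real \<Rightarrow> bool" where
  "typeB \<nu> v0 w0 \<longleftrightarrow> (\<exists>tc. typeB_at \<nu> v0 w0 tc)"

definition f0 :: "real \<Rightarrow> real" where
  "f0 x = (x^2 - 1)^2 + (x^2 + 1)^2 / x * (x^2 - 1) * arctan x"

definition finf :: "real \<Rightarrow> real" where
  "finf x = (x^2 - 1)^2 + (x^2 + 1)^2 / x * (x^2 - 1) * (arctan x - pi / 2)"

end

theory Submission
  imports Defs "HOL-Complex_Analysis.Complex_Analysis" "HOL-Real_Asymp.Real_Asymp"
begin

text \<open>F is strictly increasing with F(0) = 0 and F(v) \<rightarrow> \<pi>/2 as v \<rightarrow> \<infinity>, so v_c(t) = F^-1(G(t))
  exists exactly while G(t) \<in> (0, \<pi>/2), and v_c tends to 0 or to \<infinity> exactly when G reaches 0 or \<pi>/2.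
  Since G(t) = F(v0) + a (1 - exp(-\<nu> t)) moves monotonically from F(v0) towards F(v0) + a, type A
  (type B) blowup occurs iff F(v0) + a < 0 (resp. > \<pi>/2); written in terms of f0 and f\<infinity>, these
  thresholds flip direction with the sign of v0 - 1.

  For the norms, put w = exp(i (\<pi> - x)). Then \<omega>_- = w H(w) with H holomorphic on the closed unit
  disc, so by the mean value property the Fourier coefficient of index -1 is -H(0). Its modulus is a
  positive multiple of exp(-\<nu> t) (v_c^2 + 1)^2 / (v_c (1 + v_c)^2), which is unbounded as v_c \<rightarrow> 0 or
  v_c \<rightarrow> \<infinity>, and it bounds both the L^2 norm and the Wiener norm from below.\<close>

section \<open>The profile F and its inverse\<close>

lemma Fv_has_real_derivative: "(Fv has_real_derivative 8 * v^2 / (v^2 + 1)^3) (at v)"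
proof -
  have "0 < v^2 + (1::real)" by (simp add: add_nonneg_pos)
  then have nz: "v^2 + 1 \<noteq> (0::real)" by linarith
  have num: "((\<lambda>v. v * (v^2 - 1)) has_real_derivative 3 * v^2 - 1) (at v)"
    by (auto intro!: derivative_eq_intros simp: power2_eq_square algebra_simps)
  have den: "((\<lambda>v. (v^2 + 1)^2) has_real_derivative 4 * v * (v^2 + 1)) (at v)"
    by (auto intro!: derivative_eq_intros simp: power2_eq_square algebra_simps)
  have "(Fv has_real_derivative
      ((3 * v^2 - 1) * (v^2 + 1)^2 - v * (v^2 - 1) * (4 * v * (v^2 + 1))) / ((v^2 + 1)^2 * (v^2 + 1)^2)
        + inverse (1 + v^2)) (at v)"
    unfolding Fv_def[abs_def] using nz by (intro DERIV_add DERIV_divide num den DERIV_arctan) simp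
  moreover have "((3 * v^2 - 1) * (v^2 + 1)^2 - v * (v^2 - 1) * (4 * v * (v^2 + 1))) / ((v^2 + 1)^2 * (v^2 + 1)^2)
        + inverse (1 + v^2) = 8 * v^2 / (v^2 + 1)^3"
  proof -
    define q where "q = v^2 + 1"
    have num: "(3 * v^2 - 1) * (v^2 + 1)^2 - v * (v^2 - 1) * (4 * v * (v^2 + 1)) = q * (8 * v^2 - q^2)"
      unfolding q_def by (simp add: algebra_simps power2_eq_square)
    have "q \<noteq> 0" using nz by (simp add: q_def)
    then show ?thesis
      unfolding num unfolding add.commute[of 1 "v^2"] q_def[symmetric]
      by (simp add: field_simps power2_eq_square power3_eq_cube)
  qed
  ultimately show ?thesis by simp
qed

lemma Fv_0 [simp]: "Fv 0 = 0"
  by (simp add: Fv_def)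

lemma isCont_Fv: "isCont Fv v"
  using Fv_has_real_derivative by (rule DERIV_isCont)

lemma continuous_on_Fv: "continuous_on S Fv"
  using isCont_Fv by (blast intro: continuous_at_imp_continuous_on)

lemma strict_mono_on_Fv: "strict_mono_on {0..} Fv"
proof (rule strict_mono_onI)
  fix a b :: real assume "a \<in> {0..}" "b \<in> {0..}" "a < b"
  show "Fv a < Fv b"
  proof (intro DERIV_pos_imp_increasing_open[OF \<open>a < b\<close>] continuous_on_Fv)
    fix x assume "a < x"
    with \<open>a \<in> {0..}\<close> have "0 < 8 * x^2 / (x^2 + 1)^3" by (auto simp: add_nonneg_pos)
    then show "\<exists>y. (Fv has_real_derivative y) (at x) \<and> 0 < y"
      using Fv_has_real_derivative by blast
  qed
qed

lemma Fv_less_iff: "0 \<le> a \<Longrightarrow> 0 \<le> b \<Longrightarrow> Fv a < Fv b \<longleftrightarrow> a < b"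
  using strict_mono_on_less[OF strict_mono_on_Fv] by simp

lemma Fv_pos: "0 < v \<Longrightarrow> 0 < Fv v"
  using Fv_less_iff[of 0 v] by simp

lemma Fv_tendsto_at_top: "(Fv \<longlongrightarrow> pi / 2) at_top"
  unfolding Fv_def[abs_def] by real_asymp

lemma Fv_less_pi_half: "0 \<le> v \<Longrightarrow> Fv v < pi / 2"
proof -
  assume "0 \<le> v"
  then have "\<forall>\<^sub>F x in at_top. Fv (v + 1) \<le> Fv x"
    by (auto simp: eventually_at_top_linorder intro!: exI[of _ "v + 1"] strict_mono_on_leD[OF strict_mono_on_Fv])
  then have "Fv (v + 1) \<le> pi / 2"
    by (rule tendsto_lowerbound[OF Fv_tendsto_at_top]) simp
  moreover have "Fv v < Fv (v + 1)" using \<open>0 \<le> v\<close> by (simp add: Fv_less_iff)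
  ultimately show ?thesis by simp
qed

definition Fv_inv :: "real \<Rightarrow> real" where
  "Fv_inv y = (THE v. 0 < v \<and> Fv v = y)"

lemma vc_eq_Fv_inv: "vc \<nu> v0 w0 t = Fv_inv (Gt \<nu> v0 w0 t)"
  unfolding vc_def Fv_inv_def ..

lemma Fv_inv:
  assumes "0 < y" "y < pi / 2"
  shows "0 < Fv_inv y" "Fv (Fv_inv y) = y"
proof -
  obtain b where "\<forall>x\<ge>b. y < Fv x"
    using order_tendstoD(1)[OF Fv_tendsto_at_top assms(2)] by (auto simp: eventually_at_top_linorder)
  then have "y \<le> Fv (max b 0)" by (simp add: less_imp_le)
  then obtain v where v: "0 \<le> v" "Fv v = y"
    using IVT[of Fv 0 y "max b 0"] assms(1) isCont_Fv by auto
  with assms(1) have "0 < v" by (cases "v = 0") auto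
  have "\<exists>!v. 0 < v \<and> Fv v = y"
  proof (rule ex1I)
    show "0 < v \<and> Fv v = y" using \<open>0 < v\<close> v(2) ..
  next
    fix u assume "0 < u \<and> Fv u = y"
    then show "u = v"
      using strict_mono_on_eqD[OF strict_mono_on_Fv, of v u] v by auto
  qed
  from theI'[OF this] show "0 < Fv_inv y" "Fv (Fv_inv y) = y"
    unfolding Fv_inv_def by auto
qed

lemma Fv_inv_less_iff:
  assumes "0 < y" "y < pi / 2" "0 \<le> a"
  shows "Fv_inv y < a \<longleftrightarrow> y < Fv a"
  using Fv_less_iff[of "Fv_inv y" a] Fv_inv[OF assms(1,2)] assms(3) by simp

lemma less_Fv_inv_iff:
  assumes "0 < y" "y < pi / 2" "0 \<le> a"
  shows "a < Fv_inv y \<longleftrightarrow> Fv a < y"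
  using Fv_less_iff[of a "Fv_inv y"] Fv_inv[OF assms(1,2)] assms(3) by simp

lemma filterlim_Fv_inv_at_right_0_iff:
  assumes g: "\<forall>\<^sub>F x in F. 0 < g x \<and> g x < pi / 2"
  shows "filterlim (\<lambda>x. Fv_inv (g x)) (at_right 0) F \<longleftrightarrow> (g \<longlongrightarrow> 0) F"
proof
  assume "filterlim (\<lambda>x. Fv_inv (g x)) (at_right 0) F"
  then have "((\<lambda>x. Fv (Fv_inv (g x))) \<longlongrightarrow> Fv 0) F"
    by (intro isCont_tendsto_compose[OF isCont_Fv]) (simp add: filterlim_at)
  moreover have "\<forall>\<^sub>F x in F. Fv (Fv_inv (g x)) = g x"
    using g by eventually_elim (simp add: Fv_inv)
  ultimately show "(g \<longlongrightarrow> 0) F" by (simp add: tendsto_cong)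
next
  assume lim: "(g \<longlongrightarrow> 0) F"
  have pos: "\<forall>\<^sub>F x in F. 0 < Fv_inv (g x)"
    using g by eventually_elim (simp add: Fv_inv)
  have "((\<lambda>x. Fv_inv (g x)) \<longlongrightarrow> 0) F"
  proof (rule order_tendstoI)
    fix a :: real assume "a < 0"
    with pos show "\<forall>\<^sub>F x in F. a < Fv_inv (g x)" by (auto elim: eventually_mono)
  next
    fix a :: real assume "0 < a"
    from g order_tendstoD(2)[OF lim Fv_pos[OF \<open>0 < a\<close>]]
    show "\<forall>\<^sub>F x in F. Fv_inv (g x) < a"
      by eventually_elim (use \<open>0 < a\<close> in \<open>simp add: Fv_inv_less_iff\<close>)
  qed
  with pos show "filterlim (\<lambda>x. Fv_inv (g x)) (at_right 0) F"
    by (auto simp: filterlim_at elim: eventually_mono)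
qed

lemma filterlim_Fv_inv_at_top_iff:
  assumes g: "\<forall>\<^sub>F x in F. 0 < g x \<and> g x < pi / 2"
  shows "filterlim (\<lambda>x. Fv_inv (g x)) at_top F \<longleftrightarrow> (g \<longlongrightarrow> pi / 2) F"
proof
  assume "filterlim (\<lambda>x. Fv_inv (g x)) at_top F"
  then have "((\<lambda>x. Fv (Fv_inv (g x))) \<longlongrightarrow> pi / 2) F"
    by (rule filterlim_compose[OF Fv_tendsto_at_top])
  moreover have "\<forall>\<^sub>F x in F. Fv (Fv_inv (g x)) = g x"
    using g by eventually_elim (simp add: Fv_inv)
  ultimately show "(g \<longlongrightarrow> pi / 2) F" by (simp add: tendsto_cong)
next
  assume lim: "(g \<longlongrightarrow> pi / 2) F"
  show "filterlim (\<lambda>x. Fv_inv (g x)) at_top F"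
  proof (rule filterlim_at_top_dense[THEN iffD2], intro allI)
    fix Z :: real
    have "\<forall>\<^sub>F x in F. Fv (max Z 0) < g x"
      using order_tendstoD(1)[OF lim Fv_less_pi_half] by simp
    with g show "\<forall>\<^sub>F x in F. Z < Fv_inv (g x)"
    proof eventually_elim
      case (elim x)
      then have "max Z 0 < Fv_inv (g x)" by (subst less_Fv_inv_iff) auto
      then show ?case by simp
    qed
  qed
qed

section \<open>Blowup times\<close>

definition G_amp :: "real \<Rightarrow> real \<Rightarrow> real \<Rightarrow> real" where
  "G_amp \<nu> v0 w0 = 2 * w0 * v0 / (\<nu> * (v0^2 - 1) * (v0^2 + 1)^2)"

lemma Gt_eq: "Gt \<nu> v0 w0 t = Fv v0 + G_amp \<nu> v0 w0 * (1 - exp (- \<nu> * t))"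
  unfolding Gt_def G_amp_def by simp

lemma Gt_tendsto_at_left_iff: "(Gt \<nu> v0 w0 \<longlongrightarrow> y) (at_left tc) \<longleftrightarrow> Gt \<nu> v0 w0 tc = y"
proof -
  have "(Gt \<nu> v0 w0 \<longlongrightarrow> Gt \<nu> v0 w0 tc) (at_left tc)"
    unfolding Gt_eq[abs_def] by (intro tendsto_intros)
  then show ?thesis
    using tendsto_unique[OF trivial_limit_at_left_real] by metis
qed

lemma vc_pos: "sol_defined \<nu> v0 w0 t \<Longrightarrow> 0 < vc \<nu> v0 w0 t"
  unfolding sol_defined_def vc_eq_Fv_inv by (simp add: Fv_inv)

lemma eventually_sol_defined_at_left:
  assumes "0 < tc" "\<forall>t\<in>{0..<tc}. sol_defined \<nu> v0 w0 t"
  shows "\<forall>\<^sub>F t in at_left tc. 0 < Gt \<nu> v0 w0 t \<and> Gt \<nu> v0 w0 t < pi / 2"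
  using eventually_at_left_real[OF assms(1)] by eventually_elim (use assms(2) in \<open>auto simp: sol_defined_def\<close>)

lemma typeA_at_iff:
  "typeA_at \<nu> v0 w0 tc \<longleftrightarrow> 0 < tc \<and> (\<forall>t\<in>{0..<tc}. sol_defined \<nu> v0 w0 t) \<and> Gt \<nu> v0 w0 tc = 0"
  unfolding typeA_at_def vc_eq_Fv_inv[abs_def]
  using filterlim_Fv_inv_at_right_0_iff[OF eventually_sol_defined_at_left]
  by (auto simp: Gt_tendsto_at_left_iff vc_pos[unfolded vc_eq_Fv_inv])

lemma typeB_at_iff:
  "typeB_at \<nu> v0 w0 tc \<longleftrightarrow> 0 < tc \<and> (\<forall>t\<in>{0..<tc}. sol_defined \<nu> v0 w0 t) \<and> Gt \<nu> v0 w0 tc = pi / 2"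
  unfolding typeB_at_def vc_eq_Fv_inv[abs_def]
  using filterlim_Fv_inv_at_top_iff[OF eventually_sol_defined_at_left]
  by (auto simp: Gt_tendsto_at_left_iff vc_pos[unfolded vc_eq_Fv_inv])

lemma sol_defined_if_between:
  assumes "0 < v0" "0 \<le> \<theta>" "\<theta> < 1" "0 \<le> y" "y \<le> pi / 2"
    and "Gt \<nu> v0 w0 t = (1 - \<theta>) * Fv v0 + \<theta> * y"
  shows "sol_defined \<nu> v0 w0 t"
proof -
  have "0 < Fv v0" "Fv v0 < pi / 2" using assms(1) Fv_pos Fv_less_pi_half[of v0] by auto
  then have "0 < (1 - \<theta>) * Fv v0" "(1 - \<theta>) * Fv v0 < (1 - \<theta>) * (pi / 2)"
    using assms(3) by simp_all
  moreover have "0 \<le> \<theta> * y" "\<theta> * y \<le> \<theta> * (pi / 2)"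
    using assms(2,4,5) by (simp, intro mult_left_mono) auto
  ultimately show ?thesis
    unfolding sol_defined_def assms(6) by (simp add: algebra_simps)
qed

lemma sol_defined_global:
  assumes "0 < \<nu>" "0 < v0" "0 \<le> t"
    and "0 \<le> Fv v0 + G_amp \<nu> v0 w0" "Fv v0 + G_amp \<nu> v0 w0 \<le> pi / 2"
  shows "sol_defined \<nu> v0 w0 t"
  using assms
  by (intro sol_defined_if_between[where \<theta> = "1 - exp (- \<nu> * t)" and y = "Fv v0 + G_amp \<nu> v0 w0"])
    (auto simp: Gt_eq algebra_simps)

lemma Gt_hits_iff:
  assumes "0 < \<nu>" "0 < v0" "0 \<le> y" "y \<le> pi / 2"
  shows "(\<exists>tc>0. Gt \<nu> v0 w0 tc = y \<and> (\<forall>t\<in>{0..<tc}. sol_defined \<nu> v0 w0 t))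
    \<longleftrightarrow> (\<exists>s\<in>{0<..<1}. Fv v0 + G_amp \<nu> v0 w0 * s = y)"
proof
  assume "\<exists>tc>0. Gt \<nu> v0 w0 tc = y \<and> (\<forall>t\<in>{0..<tc}. sol_defined \<nu> v0 w0 t)"
  then obtain tc where "0 < tc" "Gt \<nu> v0 w0 tc = y" by blast
  with assms(1) show "\<exists>s\<in>{0<..<1}. Fv v0 + G_amp \<nu> v0 w0 * s = y"
    by (intro bexI[of _ "1 - exp (- \<nu> * tc)"]) (auto simp: Gt_eq)
next
  assume "\<exists>s\<in>{0<..<1}. Fv v0 + G_amp \<nu> v0 w0 * s = y"
  then obtain s where s: "0 < s" "s < 1" and y: "Fv v0 + G_amp \<nu> v0 w0 * s = y" by auto
  define tc where "tc = - ln (1 - s) / \<nu>"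
  have "0 < tc" using s assms(1) by (simp add: tc_def divide_neg_pos ln_less_zero)
  have exp_tc: "exp (- \<nu> * tc) = 1 - s" using s assms(1) by (simp add: tc_def)
  have "sol_defined \<nu> v0 w0 t" if t: "t \<in> {0..<tc}" for t
  proof (rule sol_defined_if_between[OF assms(2) _ _ assms(3,4)])
    have "exp (- \<nu> * tc) < exp (- \<nu> * t)" using t assms(1) by simp
    then have "1 - exp (- \<nu> * t) < s" using exp_tc by linarith
    then show "(1 - exp (- \<nu> * t)) / s < 1" using s by simp
    show "0 \<le> (1 - exp (- \<nu> * t)) / s" using t s assms(1) by simp
    show "Gt \<nu> v0 w0 t = (1 - (1 - exp (- \<nu> * t)) / s) * Fv v0 + (1 - exp (- \<nu> * t)) / s * y"
      using s unfolding Gt_eq y[symmetric] by (simp add: field_simps)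
  qed
  moreover have "Gt \<nu> v0 w0 tc = y" unfolding Gt_eq exp_tc y[symmetric] by simp
  ultimately show "\<exists>tc>0. Gt \<nu> v0 w0 tc = y \<and> (\<forall>t\<in>{0..<tc}. sol_defined \<nu> v0 w0 t)"
    using \<open>0 < tc\<close> by blast
qed

lemma ex_unit_interval_mult_eq_iff:
  fixes a d :: real
  assumes "d \<noteq> 0"
  shows "(\<exists>s\<in>{0<..<1}. a * s = d) \<longleftrightarrow> (0 < d \<and> d < a) \<or> (a < d \<and> d < 0)"
proof
  assume "\<exists>s\<in>{0<..<1}. a * s = d"
  then obtain s where "0 < s" "s < 1" "a * s = d" by auto
  with assms show "(0 < d \<and> d < a) \<or> (a < d \<and> d < 0)"
    by (auto simp: zero_less_mult_iff mult_less_0_iff mult_less_cancel_left1 mult_less_cancel_left2)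
next
  assume "(0 < d \<and> d < a) \<or> (a < d \<and> d < 0)"
  then show "\<exists>s\<in>{0<..<1}. a * s = d"
    by (intro bexI[of _ "d / a"]) (auto simp: field_simps)
qed

lemma typeA_iff_G_amp:
  assumes "0 < \<nu>" "0 < v0"
  shows "typeA \<nu> v0 w0 \<longleftrightarrow> G_amp \<nu> v0 w0 < - Fv v0"
proof -
  have "typeA \<nu> v0 w0 \<longleftrightarrow> (\<exists>s\<in>{0<..<1}. G_amp \<nu> v0 w0 * s = - Fv v0)"
    unfolding typeA_def typeA_at_iff using Gt_hits_iff[OF assms, of 0 w0]
    by (simp add: algebra_simps eq_neg_iff_add_eq_0 conj_commute)
  also have "\<dots> \<longleftrightarrow> G_amp \<nu> v0 w0 < - Fv v0"
    using Fv_pos[OF assms(2)] by (subst ex_unit_interval_mult_eq_iff) auto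
  finally show ?thesis .
qed

lemma typeB_iff_G_amp:
  assumes "0 < \<nu>" "0 < v0"
  shows "typeB \<nu> v0 w0 \<longleftrightarrow> pi / 2 - Fv v0 < G_amp \<nu> v0 w0"
proof -
  have "typeB \<nu> v0 w0 \<longleftrightarrow> (\<exists>s\<in>{0<..<1}. G_amp \<nu> v0 w0 * s = pi / 2 - Fv v0)"
    unfolding typeB_def typeB_at_iff using Gt_hits_iff[OF assms, of "pi / 2" w0]
    by (simp add: algebra_simps conj_commute)
  also have "\<dots> \<longleftrightarrow> pi / 2 - Fv v0 < G_amp \<nu> v0 w0"
    using Fv_less_pi_half[of v0] assms(2) by (subst ex_unit_interval_mult_eq_iff) auto
  finally show ?thesis .
qed

lemma G_amp_thresholds:
  assumes "0 < \<nu>" "0 < v0" "v0 \<noteq> 1"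
  shows "G_amp \<nu> v0 w0 < - Fv v0 \<longleftrightarrow>
      (v0 < 1 \<and> w0 > - \<nu> / 2 * f0 v0) \<or> (v0 > 1 \<and> w0 < - \<nu> / 2 * f0 v0)"
    and "pi / 2 - Fv v0 < G_amp \<nu> v0 w0 \<longleftrightarrow>
      (v0 < 1 \<and> w0 < - \<nu> / 2 * finf v0) \<or> (v0 > 1 \<and> w0 > - \<nu> / 2 * finf v0)"
proof -
  define M where "M = v0^2 - 1"
  define N where "N = v0^2 + 1"
  define D where "D = \<nu> * M * N^2 / (2 * v0)"
  have "0 < N" by (simp add: N_def add_nonneg_pos)
  have "v0^2 < 1 \<longleftrightarrow> v0 < 1" using assms(2) by (simp add: power_less_one_iff abs_less_iff)
  moreover have "v0^2 \<noteq> 1" using assms(2,3) by (simp add: power2_eq_1_iff)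
  ultimately have sign: "(v0 < 1 \<and> D < 0) \<or> (1 < v0 \<and> 0 < D)"
    using assms \<open>0 < N\<close> by (auto simp: D_def M_def mult_less_0_iff zero_less_mult_iff divide_less_0_iff)
  have amp: "G_amp \<nu> v0 w0 = w0 / D"
    using assms(2) by (simp add: G_amp_def D_def M_def N_def field_simps)
  have f0: "- \<nu> / 2 * f0 v0 = - Fv v0 * D"
    unfolding f0_def Fv_def D_def M_def[symmetric] N_def[symmetric]
    using assms(2) \<open>0 < N\<close> by (simp add: field_simps power2_eq_square)
  have finf: "- \<nu> / 2 * finf v0 = (pi / 2 - Fv v0) * D"
    unfolding finf_def Fv_def D_def M_def[symmetric] N_def[symmetric]
    using assms(2) \<open>0 < N\<close> by (simp add: field_simps power2_eq_square)
  show "G_amp \<nu> v0 w0 < - Fv v0 \<longleftrightarrow>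
      (v0 < 1 \<and> w0 > - \<nu> / 2 * f0 v0) \<or> (v0 > 1 \<and> w0 < - \<nu> / 2 * f0 v0)"
    unfolding amp f0 using sign by (auto simp: neg_divide_less_eq pos_divide_less_eq)
  show "pi / 2 - Fv v0 < G_amp \<nu> v0 w0 \<longleftrightarrow>
      (v0 < 1 \<and> w0 < - \<nu> / 2 * finf v0) \<or> (v0 > 1 \<and> w0 > - \<nu> / 2 * finf v0)"
    unfolding amp finf using sign by (auto simp: neg_less_divide_eq pos_less_divide_eq)
qed

lemma global_existence_if_no_blowup:
  assumes "0 < \<nu>" "0 < v0" "\<not> typeA \<nu> v0 w0" "\<not> typeB \<nu> v0 w0" "0 \<le> t"
  shows "sol_defined \<nu> v0 w0 t \<and> 0 < vc \<nu> v0 w0 t"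
  using assms typeA_iff_G_amp[OF assms(1,2)] typeB_iff_G_amp[OF assms(1,2)]
  by (auto intro!: sol_defined_global vc_pos)

section \<open>The Fourier coefficient of index -1\<close>

lemma square_integral_le:
  fixes g :: "real \<Rightarrow> real"
  assumes "continuous_on {a..b} g" "a < b"
  shows "(integral {a..b} g)^2 \<le> (b - a) * integral {a..b} (\<lambda>x. (g x)^2)"
proof -
  define m where "m = integral {a..b} g / (b - a)"
  have int_g: "g integrable_on {a..b}" and int_sq: "(\<lambda>x. (g x)^2) integrable_on {a..b}"
    using assms(1) by (auto intro!: integrable_continuous_interval continuous_intros)
  have "0 \<le> integral {a..b} (\<lambda>x. (g x - m)^2)"
    by (rule integral_nonneg) (auto intro!: integrable_continuous_interval continuous_intros assms(1))
  also have "integral {a..b} (\<lambda>x. (g x - m)^2)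
      = integral {a..b} (\<lambda>x. (g x)^2) - 2 * m * integral {a..b} g + m^2 * (b - a)"
  proof -
    have "(\<lambda>x. (g x - m)^2) = (\<lambda>x. ((g x)^2 - 2 * m * g x) + m^2)"
      by (auto simp: power2_eq_square algebra_simps)
    moreover have "((\<lambda>x. ((g x)^2 - 2 * m * g x) + m^2) has_integral
        (integral {a..b} (\<lambda>x. (g x)^2) - 2 * m * integral {a..b} g + m^2 * (b - a))) {a..b}"
      using assms(2) by (intro has_integral_add has_integral_diff has_integral_mult_right
          integrable_integral int_g int_sq) (auto intro: has_integral_const_real[THEN has_integral_eq_rhs])
    ultimately show ?thesis by (simp add: integral_unique)
  qed
  also have "\<dots> = integral {a..b} (\<lambda>x. (g x)^2) - (integral {a..b} g)^2 / (b - a)"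
  proof -
    have "b - a \<noteq> 0" using assms(2) by simp
    then show ?thesis by (simp add: m_def divide_simps) (simp add: power2_eq_square algebra_simps)
  qed
  finally show ?thesis using assms(2) by (simp add: field_simps)
qed

lemma integral_eq_on_open_interval:
  assumes "\<And>x. -pi < x \<Longrightarrow> x < pi \<Longrightarrow> f x = g x"
  shows "integral {-pi..pi} f = integral {-pi..pi} g"
  by (rule integral_spike[of "{-pi, pi}"]) (use assms in auto)

lemma L2_norm_ge_fourier_coeff:
  fixes f \<psi> :: "real \<Rightarrow> complex"
  assumes cont: "continuous_on {-pi..pi} \<psi>" and eq: "\<And>x. -pi < x \<Longrightarrow> x < pi \<Longrightarrow> f x = \<psi> x"
  shows "sqrt (2 * pi) * norm (fourier_coeff f k) \<le> L2_norm f"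
proof -
  define I where "I = integral {-pi..pi} (\<lambda>x. cmod (\<psi> x))"
  define J where "J = integral {-pi..pi} (\<lambda>x. (cmod (\<psi> x))^2)"
  have coeff: "fourier_coeff f k = integral {-pi..pi} (\<lambda>x. \<psi> x * exp (- \<i> * of_int k * of_real x)) / (2 * pi)"
  proof -
    have "integral {-pi..pi} (\<lambda>x. f x * exp (- \<i> * of_int k * of_real x))
        = integral {-pi..pi} (\<lambda>x. \<psi> x * exp (- \<i> * of_int k * of_real x))"
      by (rule integral_eq_on_open_interval) (simp add: eq)
    then show ?thesis unfolding fourier_coeff_def by (simp add: field_simps)
  qed
  have "norm (integral {-pi..pi} (\<lambda>x. \<psi> x * exp (- \<i> * of_int k * of_real x))) \<le> I"
    unfolding I_def
    by (rule integral_norm_bound_integral)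
       (auto intro!: integrable_continuous_interval continuous_intros cont simp: norm_mult)
  then have "2 * pi * norm (fourier_coeff f k) \<le> I"
    by (simp add: coeff norm_divide)
  moreover have "I^2 \<le> 2 * pi * J"
    using square_integral_le[of "-pi" pi "\<lambda>x. cmod (\<psi> x)"] cont
    by (auto simp: I_def J_def intro: continuous_intros)
  moreover have "0 \<le> norm (fourier_coeff f k)" by simp
  ultimately have "(2 * pi * norm (fourier_coeff f k))^2 \<le> 2 * pi * J"
    by (meson order_trans power_mono zero_le_mult_iff pi_ge_zero zero_le_numeral)
  then have "2 * pi * (norm (fourier_coeff f k))^2 \<le> J"
    by (simp add: power_mult_distrib power2_eq_square)
  then have "sqrt (2 * pi * (norm (fourier_coeff f k))^2) \<le> sqrt J" by simp
  moreover have "L2_norm f = sqrt J"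
    unfolding L2_norm_def J_def by (subst integral_eq_on_open_interval) (auto simp: eq)
  ultimately show ?thesis by (simp add: real_sqrt_mult)
qed

lemma B0_norm_ge_fourier_coeff: "ennreal (norm (fourier_coeff f k)) \<le> B0_norm f"
proof -
  have "(\<lambda>k. ennreal (cmod (fourier_coeff f k))) summable_on A" for A
    by (rule nonneg_summable_on_complete) simp
  then have "(\<Sum>\<^sub>\<infinity>j\<in>{k}. ennreal (cmod (fourier_coeff f j)))
      \<le> (\<Sum>\<^sub>\<infinity>j\<in>UNIV. ennreal (cmod (fourier_coeff f j)))"
    by (intro infsum_mono_neutral) auto
  then show ?thesis unfolding B0_norm_def by simp
qed

lemma has_integral_unit_circlepath_reflected:
  assumes "(f has_contour_integral I) (circlepath 0 1)"
  shows "((\<lambda>x. f (cis (pi - x)) * \<i> * cis (pi - x)) has_integral I) {-pi..pi}"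
proof -
  have "((\<lambda>t. f (cis t) * \<i> * cis t) has_integral I) (cbox 0 (2*pi))"
    using assms unfolding circlepath_def
    by (subst (asm) has_contour_integral_part_circlepath_iff) auto
  from has_integral_affinity[OF this, of "-1" pi]
  have "((\<lambda>x. f (cis (pi - x)) * \<i> * cis (pi - x)) has_integral I)
      ((\<lambda>x. x - pi) ` {0..2*pi})"
    by (simp add: algebra_simps)
  moreover have "(\<lambda>x. x - pi) ` {0..2*pi} = {-pi..pi}"
    by (simp add: image_add_atLeastAtMost')
  ultimately show ?thesis by simp
qed

lemma mean_value_unit_circle:
  fixes f :: "complex \<Rightarrow> complex"
  assumes "f holomorphic_on cball 0 1"
  shows "((\<lambda>x. f (cis (pi - x))) has_integral (2 * pi * f 0)) {-pi..pi}"
proof -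
  have "((\<lambda>u. f u / (u - 0)) has_contour_integral (2 * of_real pi * \<i> * f 0)) (circlepath 0 1)"
    using assms by (intro Cauchy_integral_circlepath holomorphic_on_imp_continuous_on)
      (auto intro: holomorphic_on_subset)
  from has_integral_unit_circlepath_reflected[OF this]
  have "((\<lambda>x. \<i> * f (cis (pi - x))) has_integral (2 * of_real pi * \<i> * f 0)) {-pi..pi}"
    by (rule has_integral_eq[rotated]) (simp add: field_simps)
  from has_integral_mult_right[OF this, of "-\<i>"] show ?thesis by (simp add: algebra_simps)
qed

definition omega_den :: "real \<Rightarrow> complex \<Rightarrow> complex" where
  "omega_den v u = of_real (1 + v) + of_real (1 - v) * u"

text \<open>Under w = cis (pi - x) one has tan (x/2) = \<i> (1 + w) / (w - 1), which turns \<omega>_- into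
  w * omega_hol v c1 c2 w.\<close>

definition omega_hol :: "real \<Rightarrow> complex \<Rightarrow> complex \<Rightarrow> complex \<Rightarrow> complex" where
  "omega_hol v c1 c2 u = - 2 * \<i> * c1 / (of_real (1 + v) * omega_den v u)
     + 4 * c2 * (of_real (1 + v) - of_real v * u) / ((of_real (1 + v))^2 * (omega_den v u)^2)"

definition omega_of_coeffs :: "complex \<Rightarrow> complex \<Rightarrow> real \<Rightarrow> real \<Rightarrow> complex" where
  "omega_of_coeffs c1 c2 v x = (let X = complex_of_real (tan (x / 2)); V = complex_of_real v;
      m = c1 * (1 / (X - \<i> * V) - 1 / (- \<i> - \<i> * V)) + c2 * (1 / (X - \<i> * V)^2 - 1 / (- \<i> - \<i> * V)^2)
    in m + cnj m)"

lemma omega_eq_omega_of_coeffs: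
  "omega \<nu> v0 w0 x t = omega_of_coeffs (w1 \<nu> v0 w0 t) (w2 \<nu> v0 w0 t) (vc \<nu> v0 w0 t) x"
  unfolding omega_def omega_minus_def omega_of_coeffs_def Let_def ..

lemma omega_den_nonzero:
  assumes "0 < v" "norm u \<le> 1"
  shows "omega_den v u \<noteq> 0"
proof
  assume "omega_den v u = 0"
  then have "complex_of_real (1 - v) * u = - complex_of_real (1 + v)"
    unfolding omega_den_def by (simp only: add_eq_0_iff)
  then have "norm (complex_of_real (1 + v)) = norm (complex_of_real (1 - v) * u)"
    by (simp only: norm_minus_cancel)
  then have "1 + v = \<bar>1 - v\<bar> * norm u"
    using assms(1) by (simp only: norm_mult norm_of_real)
  also have "\<dots> \<le> \<bar>1 - v\<bar>" using assms(2) by (simp add: mult_left_le)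
  finally show False using assms(1) by linarith
qed

lemma omega_hol_holomorphic:
  assumes "0 < v"
  shows "omega_hol v c1 c2 holomorphic_on cball 0 1"
proof -
  have "omega_den v holomorphic_on cball 0 1"
    unfolding omega_den_def by (intro holomorphic_intros)
  moreover have "complex_of_real (1 + v) \<noteq> 0" using assms by (simp add: complex_eq_iff)
  ultimately show ?thesis
    unfolding omega_hol_def using omega_den_nonzero[OF assms]
    by (intro holomorphic_intros) auto
qed

lemma inverse_tan_half_shift:
  assumes "-pi < x" "x < pi" "0 < v"
  shows "1 / (complex_of_real (tan (x / 2)) - \<i> * complex_of_real v)
    = \<i> * (1 - cis (pi - x)) / omega_den v (cis (pi - x))"
proof -
  have c: "cos (x / 2) > 0" using assms by (intro cos_gt_zero_pi) auto
  have s: "sin x = 2 * sin (x / 2) * cos (x / 2)"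
    using sin_double[of "x / 2"] by simp
  have "tan (x / 2) * sin x = 1 - cos x" "tan (x / 2) * (1 + cos x) = sin x"
    using c cos_double_sin[of "x / 2"] cos_double_cos[of "x / 2"]
    unfolding tan_def s by (simp_all add: field_simps power2_eq_square)
  then have "(complex_of_real (tan (x / 2)) - \<i> * complex_of_real v) * (\<i> * (1 - cis (pi - x)))
      = omega_den v (cis (pi - x))"
    by (simp add: complex_eq_iff omega_den_def cis.ctr algebra_simps)
  moreover have "complex_of_real (tan (x / 2)) - \<i> * complex_of_real v \<noteq> 0"
    using assms by (auto simp: complex_eq_iff)
  moreover have "omega_den v (cis (pi - x)) \<noteq> 0"
    using assms by (intro omega_den_nonzero) auto
  ultimately show ?thesis by (simp add: field_simps)
qed

lemma omega_minus_eq_omega_hol: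
  assumes "-pi < x" "x < pi" "0 < v"
  shows "c1 * (1 / (complex_of_real (tan (x / 2)) - \<i> * complex_of_real v) - 1 / (- \<i> - \<i> * complex_of_real v))
    + c2 * (1 / (complex_of_real (tan (x / 2)) - \<i> * complex_of_real v)^2 - 1 / (- \<i> - \<i> * complex_of_real v)^2)
    = cis (pi - x) * omega_hol v c1 c2 (cis (pi - x))"
proof -
  define w where "w = cis (pi - x)"
  have D: "omega_den v w \<noteq> 0" using assms by (intro omega_den_nonzero) (auto simp: w_def)
  have p: "1 + complex_of_real v \<noteq> 0" using assms by (simp add: complex_eq_iff)
  have "- \<i> - \<i> * complex_of_real v = - \<i> * (1 + complex_of_real v)" by (simp add: algebra_simps)
  then have B: "1 / (- \<i> - \<i> * complex_of_real v) = \<i> / (1 + complex_of_real v)"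
    using p by (simp add: divide_inverse inverse_mult_distrib)
  show ?thesis
    unfolding power_one_over[symmetric] inverse_tan_half_shift[OF assms] B w_def[symmetric]
    using D p by (simp add: omega_hol_def omega_den_def field_simps) (simp add: algebra_simps power2_eq_square)
qed

lemma omega_of_coeffs_eq_on_circle:
  assumes "-pi < x" "x < pi" "0 < v"
  shows "omega_of_coeffs c1 c2 v x
    = cis (pi - x) * omega_hol v c1 c2 (cis (pi - x)) + cnj (cis (pi - x) * omega_hol v c1 c2 (cis (pi - x)))"
  unfolding omega_of_coeffs_def Let_def omega_minus_eq_omega_hol[OF assms] ..

lemma continuous_on_omega_hol_circle:
  assumes "0 < v"
  shows "continuous_on {-pi..pi} (\<lambda>x. omega_hol v c1 c2 (cis (pi - x)))"
  by (rule continuous_on_compose2[OF holomorphic_on_imp_continuous_on[OF omega_hol_holomorphic[OF assms]]])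
    (auto intro!: continuous_intros)

lemma L2_norm_omega_of_coeffs_ge:
  assumes "0 < v"
  shows "sqrt (2 * pi) * norm (fourier_coeff (omega_of_coeffs c1 c2 v) k) \<le> L2_norm (omega_of_coeffs c1 c2 v)"
  using continuous_on_omega_hol_circle[OF assms]
  by (intro L2_norm_ge_fourier_coeff[OF _ omega_of_coeffs_eq_on_circle]) (auto intro!: continuous_intros assms)

lemma fourier_coeff_omega_of_coeffs:
  assumes "0 < v"
  shows "fourier_coeff (omega_of_coeffs c1 c2 v) (-1) = - omega_hol v c1 c2 0"
proof -
  let ?h = "omega_hol v c1 c2"
  have mean: "((\<lambda>x. ?h (cis (pi - x))) has_integral (2 * pi * ?h 0)) {-pi..pi}"
    by (rule mean_value_unit_circle[OF omega_hol_holomorphic[OF assms]])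
  have "((\<lambda>x. cis (pi - x) * cis (pi - x) * ?h (cis (pi - x))) has_integral (2 * pi * (0 * 0 * ?h 0))) {-pi..pi}"
    using omega_hol_holomorphic[OF assms]
    by (intro mean_value_unit_circle[where f = "\<lambda>u. u * u * ?h u"] holomorphic_intros)
  then have "((cnj \<circ> (\<lambda>x. cis (pi - x) * cis (pi - x) * ?h (cis (pi - x)))) has_integral cnj 0) {-pi..pi}"
    unfolding has_integral_cnj by simp
  from has_integral_add[OF has_integral_neg[OF mean] has_integral_neg[OF this]]
  have "((\<lambda>x. - ?h (cis (pi - x)) - cnj (cis (pi - x) * cis (pi - x) * ?h (cis (pi - x))))
      has_integral - (2 * pi * ?h 0)) {-pi..pi}"
    by simp
  moreover have "omega_of_coeffs c1 c2 v x * exp (- \<i> * of_int (-1) * of_real x)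
      = - ?h (cis (pi - x)) - cnj (cis (pi - x) * cis (pi - x) * ?h (cis (pi - x)))"
    if "x \<in> {-pi<..<pi}" for x
  proof -
    define w where "w = cis (pi - x)"
    define h where "h = ?h w"
    have wx: "w * cis x = -1" and cx: "cnj (cis x) = - w"
      by (simp_all add: w_def cis_mult cis_cnj complex_eq_iff)
    have "omega_of_coeffs c1 c2 v x * exp (- \<i> * of_int (-1) * of_real x) = (w * h + cnj (w * h)) * cis x"
      using that assms by (simp add: omega_of_coeffs_eq_on_circle cis_conv_exp w_def h_def)
    also have "\<dots> = h * (w * cis x) + cnj (w * h * cnj (cis x))"
      by (simp add: algebra_simps)
    also have "\<dots> = - h - cnj (w * w * h)"
      unfolding wx cx by (simp add: algebra_simps)
    finally show ?thesis unfolding w_def h_def .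
  qed
  ultimately have "integral {-pi..pi} (\<lambda>x. omega_of_coeffs c1 c2 v x * exp (- \<i> * of_int (-1) * of_real x))
      = - (2 * pi * ?h 0)"
    by (subst integral_eq_on_open_interval[where g = "\<lambda>x. - ?h (cis (pi - x)) - cnj (cis (pi - x) * cis (pi - x) * ?h (cis (pi - x)))"])
      (auto simp: integral_unique)
  then show ?thesis unfolding fourier_coeff_def by simp
qed

lemma omega_hol_at_0:
  assumes "0 < v" "v \<noteq> 1"
  shows "omega_hol v (2 * \<i> * of_real v / (1 - (of_real v)^2) * c2) c2 0
    = 4 * c2 / of_real ((1 + v)^3 * (1 - v))"
proof -
  define V where "V = complex_of_real v"
  define p where "p = 1 + V"
  define m where "m = 1 - V"
  have mp: "1 - V^2 = m * p" and "V + m = 1"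
    by (simp_all add: m_def p_def power2_eq_square algebra_simps)
  have "m \<noteq> 0" "p \<noteq> 0"
    using assms by (auto simp: complex_eq_iff V_def m_def p_def)
  then have "- 2 * \<i> * (2 * \<i> * V / (1 - V^2) * c2) / (p * p) + 4 * c2 * (p - V * 0) / (p^2 * p^2)
      = 4 * (V + m) * c2 / (p^3 * m)"
    unfolding mp by (simp add: field_simps power2_eq_square power3_eq_cube)
  also have "\<dots> = 4 * c2 / (p^3 * m)" using \<open>V + m = 1\<close> by simp
  finally show ?thesis
    by (simp add: omega_hol_def omega_den_def V_def p_def m_def)
qed

lemma norm_fourier_coeff_omega:
  assumes v: "vc \<nu> v0 w0 t = v" "0 < v" "v \<noteq> 1" and v0: "0 < v0" "v0 \<noteq> 1"
  shows "norm (fourier_coeff (\<lambda>x. omega \<nu> v0 w0 x t) (-1))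
    = 4 * \<bar>w0\<bar> * v0 / (\<bar>v0^2 - 1\<bar> * (v0^2 + 1)^2) * exp (- \<nu> * t) * ((v^2 + 1)^2 / (v * (1 + v)^2))"
proof -
  define W where "W = w2i \<nu> v0 w0 t"
  define p where "p = 1 + v"
  define m where "m = \<bar>1 - v\<bar>"
  define A where "A = \<bar>v0^2 - 1\<bar>"
  define M where "M = v0^2 + 1"
  have pos: "0 < p" "0 < m" "0 < A" "0 < M"
    using v v0 by (auto simp: p_def m_def A_def M_def power2_eq_1_iff add_pos_nonneg)
  have w2: "w2 \<nu> v0 w0 t = \<i> * of_real W" unfolding w2_def W_def ..
  have w1: "w1 \<nu> v0 w0 t = 2 * \<i> * of_real v / (1 - (of_real v)^2) * w2 \<nu> v0 w0 t"
    unfolding w1_def Let_def v(1) ..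
  have "fourier_coeff (\<lambda>x. omega \<nu> v0 w0 x t) (-1) = - (4 * (\<i> * of_real W) / of_real ((1 + v)^3 * (1 - v)))"
    unfolding omega_eq_omega_of_coeffs v(1) fourier_coeff_omega_of_coeffs[OF v(2)] w1
      omega_hol_at_0[OF v(2,3)] w2 ..
  then have "norm (fourier_coeff (\<lambda>x. omega \<nu> v0 w0 x t) (-1)) = 4 * \<bar>W\<bar> / (p^3 * m)"
    using v(2) unfolding p_def m_def
    by (simp only: norm_minus_cancel norm_divide norm_mult norm_of_real) (simp add: abs_mult)
  also have "\<bar>W\<bar> = \<bar>w0\<bar> * exp (- \<nu> * t) * (v0 / v) * (p * m / A) * ((v^2 + 1) / M)^2"
  proof -
    have "v^2 - 1 = (1 + v) * (v - 1)" by (simp add: power2_eq_square algebra_simps)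
    then have "\<bar>v^2 - 1\<bar> = p * m"
      using v(2) by (simp add: p_def m_def abs_mult abs_minus_commute)
    then show ?thesis
      using v v0 unfolding W_def w2i_def Let_def A_def M_def by (simp add: abs_mult abs_divide)
  qed
  also have "4 * (\<bar>w0\<bar> * exp (- \<nu> * t) * (v0 / v) * (p * m / A) * ((v^2 + 1) / M)^2) / (p^3 * m)
      = 4 * \<bar>w0\<bar> * v0 / (A * M^2) * exp (- \<nu> * t) * ((v^2 + 1)^2 / (v * p^2))"
    using v(2) pos by (simp add: field_simps power2_eq_square power3_eq_cube)
  finally show ?thesis unfolding A_def M_def p_def .
qed

lemma fourier_coeff_omega_unbounded:
  assumes v0: "0 < v0" "v0 \<noteq> 1" and blowup: "typeA_at \<nu> v0 w0 tc \<or> typeB_at \<nu> v0 w0 tc"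
  shows "filterlim (\<lambda>t. norm (fourier_coeff (\<lambda>x. omega \<nu> v0 w0 x t) (-1))) at_top (at_left tc)"
proof -
  define q :: "real \<Rightarrow> real" where "q v = (v^2 + 1)^2 / (v * (1 + v)^2)" for v
  define K where "K = 4 * \<bar>w0\<bar> * v0 / (\<bar>v0^2 - 1\<bar> * (v0^2 + 1)^2)"
  have tc: "0 < tc" and sol: "\<forall>t\<in>{0..<tc}. sol_defined \<nu> v0 w0 t"
    and Gtc: "Gt \<nu> v0 w0 tc = 0 \<or> Gt \<nu> v0 w0 tc = pi / 2"
    using blowup unfolding typeA_at_iff typeB_at_iff by auto
  have "filterlim q at_top (at_right 0)" "filterlim q at_top at_top"
    unfolding q_def by real_asymp+
  then have q_lim: "filterlim (\<lambda>t. q (vc \<nu> v0 w0 t)) at_top (at_left tc)"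
    using blowup unfolding typeA_at_def typeB_at_def by (auto intro: filterlim_compose)
  have "w0 \<noteq> 0"
  proof
    assume "w0 = 0"
    then have "Gt \<nu> v0 w0 tc = Fv v0" by (simp add: Gt_eq G_amp_def)
    with Gtc v0 Fv_pos[of v0] Fv_less_pi_half[of v0] show False by auto
  qed
  moreover have "v0^2 \<noteq> 1" "0 < v0^2 + 1" using v0 by (simp_all add: power2_eq_1_iff add_nonneg_pos)
  ultimately have "0 < K" using v0 unfolding K_def by (intro divide_pos_pos mult_pos_pos) auto
  have "\<forall>\<^sub>F t in at_left tc. norm (fourier_coeff (\<lambda>x. omega \<nu> v0 w0 x t) (-1))
      = K * exp (- \<nu> * t) * q (vc \<nu> v0 w0 t)"
    using eventually_at_left_real[OF tc] filterlim_at_top_dense[THEN iffD1, OF q_lim, rule_format, of 1]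
  proof eventually_elim
    case (elim t)
    then have "0 < vc \<nu> v0 w0 t" using sol by (auto intro: vc_pos)
    \<comment> \<open>q > 1 excludes v_c = 1, where the formula for w1 divides by zero\<close>
    moreover have "vc \<nu> v0 w0 t \<noteq> 1" using elim by (auto simp: q_def)
    ultimately show ?case
      unfolding K_def q_def using norm_fourier_coeff_omega[OF refl _ _ v0] by simp
  qed
  moreover have "filterlim (\<lambda>t. K * exp (- \<nu> * t) * q (vc \<nu> v0 w0 t)) at_top (at_left tc)"
    using \<open>0 < K\<close>
    by (intro filterlim_tendsto_pos_mult_at_top[OF _ _ q_lim, of _ "K * exp (- \<nu> * tc)"] tendsto_intros) auto
  ultimately show ?thesis by (simp add: filterlim_cong)
qed

lemma blowup_norms:
  assumes v0: "0 < v0" "v0 \<noteq> 1" and blowup: "typeA_at \<nu> v0 w0 tc \<or> typeB_at \<nu> v0 w0 tc"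
  shows "filterlim (\<lambda>t. L2_norm (\<lambda>x. omega \<nu> v0 w0 x t)) at_top (at_left tc)"
    and "((\<lambda>t. B0_norm (\<lambda>x. omega \<nu> v0 w0 x t)) \<longlongrightarrow> \<infinity>) (at_left tc)"
proof -
  define c where "c t = norm (fourier_coeff (\<lambda>x. omega \<nu> v0 w0 x t) (-1))" for t
  have c_lim: "filterlim c at_top (at_left tc)"
    unfolding c_def by (rule fourier_coeff_omega_unbounded[OF v0 blowup])
  have tc: "0 < tc" and sol: "\<forall>t\<in>{0..<tc}. sol_defined \<nu> v0 w0 t"
    using blowup unfolding typeA_at_iff typeB_at_iff by auto
  have "\<forall>\<^sub>F t in at_left tc. sqrt (2 * pi) * c t \<le> L2_norm (\<lambda>x. omega \<nu> v0 w0 x t)"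
    using eventually_at_left_real[OF tc]
  proof eventually_elim
    case (elim t)
    then have "0 < vc \<nu> v0 w0 t" using sol by (auto intro: vc_pos)
    then show ?case
      unfolding c_def omega_eq_omega_of_coeffs by (rule L2_norm_omega_of_coeffs_ge)
  qed
  moreover have "filterlim (\<lambda>t. sqrt (2 * pi) * c t) at_top (at_left tc)"
    by (intro filterlim_tendsto_pos_mult_at_top[OF tendsto_const _ c_lim]) simp
  ultimately show "filterlim (\<lambda>t. L2_norm (\<lambda>x. omega \<nu> v0 w0 x t)) at_top (at_left tc)"
    by (rule filterlim_at_top_mono[rotated])
  have "((\<lambda>t. ennreal (c t)) \<longlongrightarrow> \<infinity>) (at_left tc)"
    using c_lim by (simp add: ennreal_tendsto_top_eq_at_top)
  show "((\<lambda>t. B0_norm (\<lambda>x. omega \<nu> v0 w0 x t)) \<longlongrightarrow> \<infinity>) (at_left tc)"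
  proof (rule order_tendstoI)
    fix a :: ennreal assume "a < \<infinity>"
    with order_tendstoD(1)[OF \<open>((\<lambda>t. ennreal (c t)) \<longlongrightarrow> \<infinity>) _\<close>]
    have "\<forall>\<^sub>F t in at_left tc. a < ennreal (c t)" by simp
    then show "\<forall>\<^sub>F t in at_left tc. a < B0_norm (\<lambda>x. omega \<nu> v0 w0 x t)"
      by eventually_elim (use B0_norm_ge_fourier_coeff in \<open>auto simp: c_def intro: less_le_trans\<close>)
  qed simp
qed

theorem theorem3p7:
  fixes \<nu> v0 w0 :: real
  assumes "0 < \<nu>" and "0 < v0" and "v0 \<noteq> 1"
  shows "(typeA \<nu> v0 w0 \<longleftrightarrow>
            (0 < v0 \<and> v0 < 1 \<and> w0 > - \<nu> / 2 * f0 v0) \<or> (v0 > 1 \<and> w0 < - \<nu> / 2 * f0 v0))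
       \<and> (typeB \<nu> v0 w0 \<longleftrightarrow>
            (0 < v0 \<and> v0 < 1 \<and> w0 < - \<nu> / 2 * finf v0) \<or> (v0 > 1 \<and> w0 > - \<nu> / 2 * finf v0))
       \<and> (\<forall>tc. typeA_at \<nu> v0 w0 tc \<or> typeB_at \<nu> v0 w0 tc \<longrightarrow>
            filterlim (\<lambda>t. L2_norm (\<lambda>x. omega \<nu> v0 w0 x t)) at_top (at_left tc) \<and>
            ((\<lambda>t. B0_norm (\<lambda>x. omega \<nu> v0 w0 x t)) \<longlongrightarrow> \<infinity>) (at_left tc))
       \<and> (((0 < v0 \<and> v0 < 1 \<and> - \<nu> / 2 * finf v0 \<le> w0 \<and> w0 \<le> - \<nu> / 2 * f0 v0) \<or>
            (v0 > 1 \<and> - \<nu> / 2 * f0 v0 \<le> w0 \<and> w0 \<le> - \<nu> / 2 * finf v0)) \<longrightarrow>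
            \<not> typeA \<nu> v0 w0 \<and> \<not> typeB \<nu> v0 w0 \<and>
            (\<forall>t > 0. sol_defined \<nu> v0 w0 t \<and> 0 < vc \<nu> v0 w0 t))"
proof -
  have A: "typeA \<nu> v0 w0 \<longleftrightarrow> (v0 < 1 \<and> w0 > - \<nu> / 2 * f0 v0) \<or> (v0 > 1 \<and> w0 < - \<nu> / 2 * f0 v0)"
    using typeA_iff_G_amp[OF assms(1,2)] G_amp_thresholds(1)[OF assms] by simp
  have B: "typeB \<nu> v0 w0 \<longleftrightarrow> (v0 < 1 \<and> w0 < - \<nu> / 2 * finf v0) \<or> (v0 > 1 \<and> w0 > - \<nu> / 2 * finf v0)"
    using typeB_iff_G_amp[OF assms(1,2)] G_amp_thresholds(2)[OF assms] by simp
  show ?thesis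
    using A B assms(2) blowup_norms[OF assms(2,3)] global_existence_if_no_blowup[OF assms(1,2)]
    by (auto simp: not_less)
qed

end
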